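(* Let $W$ be the unilateral weighted shift on $\ell^2$ with bounded positive weights $\{w_n\}_{n\ge0}$, and let $m\ge2$ be an integer. The following are equivalent: (i) $W$ is a weakly concave $m$-isometry; (ii) there exists $p\in\mathbb R[x]$ of degree at most $m-1$ such that $p(n)>0$ and $w_n^2=p(n+1)/p(n)$ for all $n\in\mathbb Z_+$, $p(n)\le p(n+1)$ for all $n\in\mathbb Z_+$, and $p(n)p(n+2)\le p(n+1)^2$ for all integers $n\ge1$. Moreover, if $p\in\mathbb R[x]$ has positive leading coefficient and all its roots are negative real numbers, then $p(n)\le p(n+1)$ for all $n\in\mathbb Z_+$ and $p(n)p(n+2)\le p(n+1)^2$ for all $n\ge1$.
   Context: $We_n=w_ne_{n+1}$ for the standard basis $\{e_n\}$. $T$ is an $m$-isometry if $\sum_{k=0}^m(-1)^k\binom mk T^{*k}T^k=0$. For left-invertible $T$, $T'=T(T^*T)^{-1}$; $T$ is weakly concave if it is left-invertible, $\sigma_{ap}(T)\subseteq\partial\mathbb D$ (approximate point spectrum in the unit circle), $\|x\|\le\|Tx\|$ for all $x$, and $\|T'T^*x\|\le\|T'Tx\|$ for all $x$. *)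

theory Defs
  imports "HOL-Analysis.Analysis" "HOL-Computational_Algebra.Polynomial"
begin

text \<open>The Hilbert space l2 = l2(Z_+) of complex square-summable sequences,
  realised as a subset of nat => complex. Operators are functions on sequences,
  considered only on l2.\<close>

type_synonym seq = "nat \<Rightarrow> complex"
type_synonym op = "seq \<Rightarrow> seq"

definition l2 :: "seq set" where
  "l2 = {x. summable (\<lambda>n. (cmod (x n))\<^sup>2)}"

definition l2_norm :: "seq \<Rightarrow> real" where
  "l2_norm x = sqrt (\<Sum>n. (cmod (x n))\<^sup>2)"

definition l2_inner :: "seq \<Rightarrow> seq \<Rightarrow> complex" where
  "l2_inner x y = (\<Sum>n. x n * cnj (y n))"

definition bounded_op :: "op \<Rightarrow> bool" where
  "bounded_op T \<longleftrightarrow>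
     (\<forall>x\<in>l2. T x \<in> l2) \<and>
     (\<forall>x\<in>l2. \<forall>y\<in>l2. \<forall>a b. T (\<lambda>n. a * x n + b * y n) = (\<lambda>n. a * T x n + b * T y n)) \<and>
     (\<exists>C. \<forall>x\<in>l2. l2_norm (T x) \<le> C * l2_norm x)"

definition is_adjoint :: "op \<Rightarrow> op \<Rightarrow> bool" where
  "is_adjoint T S \<longleftrightarrow> (\<forall>y\<in>l2. S y \<in> l2) \<and>
     (\<forall>x\<in>l2. \<forall>y\<in>l2. l2_inner (T x) y = l2_inner x (S y))"

definition adj :: "op \<Rightarrow> op" where
  "adj T = (SOME S. is_adjoint T S)"

definition op_inv :: "op \<Rightarrow> op" where
  "op_inv A = (SOME B. bounded_op B \<and> (\<forall>x\<in>l2. A (B x) = x \<and> B (A x) = x))"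

definition left_invertible :: "op \<Rightarrow> bool" where
  "left_invertible T \<longleftrightarrow> bounded_op T \<and> (\<exists>L. bounded_op L \<and> (\<forall>x\<in>l2. L (T x) = x))"

definition cauchy_dual :: "op \<Rightarrow> op" where
  "cauchy_dual T = T \<circ> op_inv (adj T \<circ> T)"

definition ap_spec :: "op \<Rightarrow> complex set" where
  "ap_spec T = {c. \<exists>x :: nat \<Rightarrow> seq. (\<forall>k. x k \<in> l2 \<and> l2_norm (x k) = 1) \<and>
      (\<lambda>k. l2_norm (\<lambda>n. T (x k) n - c * x k n)) \<longlonglongrightarrow> 0}"

definition weakly_concave :: "op \<Rightarrow> bool" where
  "weakly_concave T \<longleftrightarrow> left_invertible T \<and> ap_spec T \<subseteq> {z. cmod z = 1} \<and>
     (\<forall>x\<in>l2. l2_norm x \<le> l2_norm (T x)) \<and>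
     (\<forall>x\<in>l2. l2_norm (cauchy_dual T (adj T x)) \<le> l2_norm (cauchy_dual T (T x)))"

definition m_isometry :: "nat \<Rightarrow> op \<Rightarrow> bool" where
  "m_isometry m T \<longleftrightarrow> bounded_op T \<and> (\<forall>x\<in>l2.
     (\<lambda>n. \<Sum>k\<le>m. (-1)^k * of_nat (m choose k) * ((adj T ^^ k) ((T ^^ k) x)) n) = (\<lambda>_. 0))"

text \<open>Unilateral weighted shift: W e_n = w_n e_{n+1}.\<close>
definition wshift :: "(nat \<Rightarrow> real) \<Rightarrow> op" where
  "wshift w x = (\<lambda>n. if n = 0 then 0 else complex_of_real (w (n - 1)) * x (n - 1))"

end

theory Submission
  imports Defs "HOL-Real_Asymp.Real_Asymp" "HOL-Computational_Algebra.Fundamental_Theorem_Algebra"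
begin

text \<open>
  Everything about the weighted shift W reduces to diagonal operators in the standard basis:
  W*^k W^k multiplies the n-th coordinate by w_n^2 ... w_(n+k-1)^2, the Cauchy dual satisfies
  W' W* = diag(0, 1, 1, ...), and ||W' W x|| = ||diag(w_n / w_(n+1)) x||. Hence W is an
  m-isometry iff the m-th finite difference of the moments M(n) = w_0^2 ... w_(n-1)^2 vanishes,
  i.e. iff M is a polynomial of degree < m; W is expansive iff all w_n >= 1; and the Cauchy dual
  condition holds iff w_(n+1) <= w_n for n >= 1. Since w_n^2 = M(n+1)/M(n), these are exactly
  monotonicity and log-concavity of the polynomial. The spectral condition comes for free: an
  expansive operator has no approximate eigenvalues inside the unit disc, and
  ||W^j||^2 <= M(j+1) grows polynomially, so the spectral radius is at most 1.

  For the last part, a polynomial with positive leading coefficient and negative real roots is a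
  positive constant times factors x - a with a < 0; each factor is positive, nondecreasing and
  log-concave on [0, oo), and these properties are preserved under products.
\<close>

section \<open>The sequence space l2\<close>

lemma l2_norm_nonneg: "x \<in> l2 \<Longrightarrow> 0 \<le> l2_norm x"
  unfolding l2_norm_def l2_def by (auto intro: suminf_nonneg)

lemma l2_norm_power2: "x \<in> l2 \<Longrightarrow> (l2_norm x)\<^sup>2 = (\<Sum>n. (cmod (x n))\<^sup>2)"
  unfolding l2_norm_def l2_def by (simp add: suminf_nonneg)

lemma l2_norm_le_iff: "l2_norm x \<le> l2_norm y \<longleftrightarrow> (\<Sum>n. (cmod (x n))\<^sup>2) \<le> (\<Sum>n. (cmod (y n))\<^sup>2)"
  unfolding l2_norm_def by simp

lemma l2_norm_diff_commute: "l2_norm (\<lambda>n. x n - y n) = l2_norm (\<lambda>n. y n - x n)"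
  unfolding l2_norm_def by (simp add: norm_minus_commute)

lemma l2_add:
  assumes "x \<in> l2" "y \<in> l2"
  shows "(\<lambda>n. x n + y n) \<in> l2"
proof -
  have "(cmod (x n + y n))\<^sup>2 \<le> 2 * (cmod (x n))\<^sup>2 + 2 * (cmod (y n))\<^sup>2" for n
  proof -
    have "(cmod (x n + y n))\<^sup>2 \<le> (cmod (x n) + cmod (y n))\<^sup>2"
      by (simp add: norm_triangle_ineq power_mono)
    moreover have "0 \<le> (cmod (x n) - cmod (y n))\<^sup>2" by simp
    ultimately show ?thesis unfolding power2_sum power2_diff by linarith
  qed
  moreover have "summable (\<lambda>n. 2 * (cmod (x n))\<^sup>2 + 2 * (cmod (y n))\<^sup>2)"
    using assms by (intro summable_add summable_mult) (auto simp: l2_def)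
  ultimately show ?thesis
    unfolding l2_def by (auto intro: summable_comparison_test')
qed

lemma l2_cmult: "x \<in> l2 \<Longrightarrow> (\<lambda>n. c * x n) \<in> l2"
  unfolding l2_def by (simp add: norm_mult power_mult_distrib summable_mult)

lemma l2_norm_cmult: "x \<in> l2 \<Longrightarrow> l2_norm (\<lambda>n. c * x n) = cmod c * l2_norm x"
  unfolding l2_norm_def l2_def
  by (simp add: norm_mult power_mult_distrib suminf_mult real_sqrt_mult)

lemma l2_diff: "x \<in> l2 \<Longrightarrow> y \<in> l2 \<Longrightarrow> (\<lambda>n. x n - y n) \<in> l2"
  using l2_add[of x "\<lambda>n. - 1 * y n"] l2_cmult[of y "- 1"] by simp

lemma l2_norm_triangle:
  assumes "x \<in> l2" "y \<in> l2"
  shows "l2_norm (\<lambda>n. x n + y n) \<le> l2_norm x + l2_norm y"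
proof -
  have partial_le: "L2_set (\<lambda>n. cmod (z n)) {..<N} \<le> l2_norm z" if "z \<in> l2" for z N
    using that unfolding L2_set_def l2_norm_def l2_def
    by (intro real_sqrt_le_mono sum_le_suminf) auto
  have "(\<Sum>n<N. (cmod (x n + y n))\<^sup>2) \<le> (l2_norm x + l2_norm y)\<^sup>2" for N
  proof -
    have "L2_set (\<lambda>n. cmod (x n + y n)) {..<N} \<le> L2_set (\<lambda>n. cmod (x n) + cmod (y n)) {..<N}"
      by (rule L2_set_mono) (auto intro: norm_triangle_ineq)
    also have "\<dots> \<le> L2_set (\<lambda>n. cmod (x n)) {..<N} + L2_set (\<lambda>n. cmod (y n)) {..<N}"
      by (rule L2_set_triangle_ineq)
    also have "\<dots> \<le> l2_norm x + l2_norm y"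
      using partial_le assms by (meson add_mono)
    finally show ?thesis
      unfolding L2_set_def by (simp add: sqrt_le_D)
  qed
  then have "(\<Sum>n. (cmod (x n + y n))\<^sup>2) \<le> (l2_norm x + l2_norm y)\<^sup>2"
    using l2_add[OF assms] by (intro suminf_le_const) (auto simp: l2_def)
  then have "l2_norm (\<lambda>n. x n + y n) \<le> sqrt ((l2_norm x + l2_norm y)\<^sup>2)"
    unfolding l2_norm_def[of "\<lambda>n. x n + y n"] by (rule real_sqrt_le_mono)
  then show ?thesis
    using l2_norm_nonneg[OF assms(1)] l2_norm_nonneg[OF assms(2)] by simp
qed

lemma l2_norm_diff_ge:
  assumes "x \<in> l2" "y \<in> l2"
  shows "l2_norm x - l2_norm y \<le> l2_norm (\<lambda>n. x n - y n)"
  using l2_norm_triangle[OF l2_diff[OF assms] assms(2)] by simp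

lemma summable_l2_inner:
  assumes "x \<in> l2" "y \<in> l2"
  shows "summable (\<lambda>n. x n * cnj (y n))"
proof (rule summable_comparison_test')
  show "summable (\<lambda>n. (cmod (x n))\<^sup>2 + (cmod (y n))\<^sup>2)"
    using assms by (intro summable_add) (auto simp: l2_def)
  fix n
  have "0 \<le> (cmod (x n) - cmod (y n))\<^sup>2" "0 \<le> cmod (x n) * cmod (y n)" by simp_all
  then show "norm (x n * cnj (y n)) \<le> (cmod (x n))\<^sup>2 + (cmod (y n))\<^sup>2"
    unfolding power2_diff norm_mult complex_mod_cnj by linarith
qed

lemma l2_shift_iff: "(\<lambda>n. x (n + k)) \<in> l2 \<longleftrightarrow> x \<in> l2"
  unfolding l2_def using summable_iff_shift[of "\<lambda>n. (cmod (x n))\<^sup>2" k] by simp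

lemma l2_norm_shift:
  assumes "x \<in> l2" "\<And>n. n < k \<Longrightarrow> x n = 0"
  shows "l2_norm (\<lambda>n. x (n + k)) = l2_norm x"
  using assms suminf_split_initial_segment[of "\<lambda>n. (cmod (x n))\<^sup>2" k]
  unfolding l2_norm_def l2_def by simp

lemma l2_norm_tail_le: "x \<in> l2 \<Longrightarrow> l2_norm (\<lambda>n. x (Suc n)) \<le> l2_norm x"
  using suminf_split_head[of "\<lambda>n. (cmod (x n))\<^sup>2"] unfolding l2_norm_def l2_def by simp

definition unit_vec :: "nat \<Rightarrow> seq" where
  "unit_vec k = (\<lambda>n. if n = k then 1 else 0)"

lemma suminf_unit_vec: "(\<Sum>n. f n * (cmod (unit_vec k n))\<^sup>2) = (f k :: real)"
proof -
  have "(\<lambda>n. f n * (cmod (unit_vec k n))\<^sup>2) = (\<lambda>n. if n = k then f n else 0)"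
    by (auto simp: unit_vec_def)
  then show ?thesis using sums_single[of k f] by (simp add: sums_iff)
qed

lemma unit_vec_l2: "unit_vec k \<in> l2"
proof -
  have "(\<lambda>n. (cmod (unit_vec k n))\<^sup>2) = (\<lambda>n. if n = k then 1 else 0)"
    by (auto simp: unit_vec_def)
  then show ?thesis
    unfolding l2_def using summable_single[of k "\<lambda>_. 1::real"] by simp
qed

lemma l2_inner_unit_vec: "l2_inner (unit_vec k) y = cnj (y k)"
proof -
  have "(\<lambda>n. unit_vec k n * cnj (y n)) = (\<lambda>n. if n = k then cnj (y n) else 0)"
    by (auto simp: unit_vec_def)
  then show ?thesis
    unfolding l2_inner_def using sums_single[of k "\<lambda>n. cnj (y n)"] by (simp add: sums_iff)
qed

definition diag_op :: "(nat \<Rightarrow> real) \<Rightarrow> op" where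
  "diag_op c x = (\<lambda>n. complex_of_real (c n) * x n)"

lemma diag_op_diag_op [simp]: "diag_op c (diag_op d x) = diag_op (\<lambda>n. c n * d n) x"
  by (simp add: diag_op_def fun_eq_iff)

lemma summable_l2_weighted:
  assumes "x \<in> l2" "\<And>n. \<bar>c n\<bar> \<le> K"
  shows "summable (\<lambda>n. (c n)\<^sup>2 * (cmod (x n))\<^sup>2)"
proof (rule summable_comparison_test')
  show "summable (\<lambda>n. K\<^sup>2 * (cmod (x n))\<^sup>2)"
    using assms(1) by (intro summable_mult) (simp add: l2_def)
  fix n
  have "(c n)\<^sup>2 \<le> K\<^sup>2"
    using assms(2)[of n] by (metis abs_le_square_iff abs_of_nonneg abs_ge_zero order_trans)
  then show "norm ((c n)\<^sup>2 * (cmod (x n))\<^sup>2) \<le> K\<^sup>2 * (cmod (x n))\<^sup>2"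
    by (simp add: mult_right_mono)
qed

lemma cmod_diag_op_power2: "(cmod (diag_op c x n))\<^sup>2 = (c n)\<^sup>2 * (cmod (x n))\<^sup>2"
  by (simp add: diag_op_def norm_mult power_mult_distrib)

lemma diag_op_l2:
  assumes "x \<in> l2" "\<And>n. \<bar>c n\<bar> \<le> K"
  shows "diag_op c x \<in> l2"
  using summable_l2_weighted[OF assms] by (simp add: l2_def cmod_diag_op_power2)

lemma l2_norm_diag_op_le:
  assumes "x \<in> l2" "\<And>n. \<bar>c n\<bar> \<le> K"
  shows "l2_norm (diag_op c x) \<le> K * l2_norm x"
proof -
  have K: "0 \<le> K" using assms(2)[of 0] by linarith
  have "(\<Sum>n. (c n)\<^sup>2 * (cmod (x n))\<^sup>2) \<le> (\<Sum>n. K\<^sup>2 * (cmod (x n))\<^sup>2)"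
    using summable_l2_weighted[OF assms] summable_l2_weighted[OF assms(1), where c="\<lambda>_. K" and K=K] K assms(2)
    by (intro suminf_le mult_right_mono) (auto simp: abs_le_square_iff[symmetric])
  also have "\<dots> = (K * l2_norm x)\<^sup>2"
    using assms(1) by (simp add: suminf_mult l2_norm_power2 power_mult_distrib l2_def)
  finally have "(l2_norm (diag_op c x))\<^sup>2 \<le> (K * l2_norm x)\<^sup>2"
    using l2_norm_power2[OF diag_op_l2[OF assms]] by (simp add: cmod_diag_op_power2)
  then show ?thesis
    using K l2_norm_nonneg[OF assms(1)] by (meson power2_le_imp_le mult_nonneg_nonneg)
qed

lemma bounded_op_diag_op:
  assumes "\<And>n. \<bar>c n\<bar> \<le> K"
  shows "bounded_op (diag_op c)"
  unfolding bounded_op_def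
  by (intro conjI ballI allI exI[of _ K] diag_op_l2[OF _ assms] l2_norm_diag_op_le[OF _ assms])
    (auto simp: diag_op_def algebra_simps)

lemma l2_norm_diag_op_unit_vec: "l2_norm (diag_op c (unit_vec k)) = \<bar>c k\<bar>"
  unfolding l2_norm_def cmod_diag_op_power2 suminf_unit_vec by simp

lemma l2_norm_diag_op_le_iff:
  assumes "\<And>n. \<bar>c n\<bar> \<le> K" "\<And>n. \<bar>d n\<bar> \<le> K"
  shows "(\<forall>x\<in>l2. l2_norm (diag_op c x) \<le> l2_norm (diag_op d x)) \<longleftrightarrow> (\<forall>n. \<bar>c n\<bar> \<le> \<bar>d n\<bar>)"
proof
  assume "\<forall>x\<in>l2. l2_norm (diag_op c x) \<le> l2_norm (diag_op d x)"
  then show "\<forall>n. \<bar>c n\<bar> \<le> \<bar>d n\<bar>"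
    using unit_vec_l2 by (metis l2_norm_diag_op_unit_vec)
next
  assume cd: "\<forall>n. \<bar>c n\<bar> \<le> \<bar>d n\<bar>"
  show "\<forall>x\<in>l2. l2_norm (diag_op c x) \<le> l2_norm (diag_op d x)"
  proof
    fix x assume "x \<in> l2"
    then have "(\<Sum>n. (c n)\<^sup>2 * (cmod (x n))\<^sup>2) \<le> (\<Sum>n. (d n)\<^sup>2 * (cmod (x n))\<^sup>2)"
      using cd summable_l2_weighted assms
      by (intro suminf_le mult_right_mono) (auto simp: abs_le_square_iff)
    then show "l2_norm (diag_op c x) \<le> l2_norm (diag_op d x)"
      unfolding l2_norm_le_iff cmod_diag_op_power2 .
  qed
qed

lemma diag_op_eq_0_iff: "(\<forall>x\<in>l2. diag_op c x = (\<lambda>_. 0)) \<longleftrightarrow> (\<forall>n. c n = 0)"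
proof
  assume "\<forall>x\<in>l2. diag_op c x = (\<lambda>_. 0)"
  then have "diag_op c (unit_vec n) n = 0" for n
    using unit_vec_l2 by metis
  then show "\<forall>n. c n = 0"
    by (simp add: diag_op_def unit_vec_def)
qed (simp add: diag_op_def)

section \<open>Approximate point spectrum of expansive operators\<close>

lemma bounded_op_l2: "bounded_op T \<Longrightarrow> x \<in> l2 \<Longrightarrow> T x \<in> l2"
  unfolding bounded_op_def by blast

lemma bounded_op_funpow_l2: "bounded_op T \<Longrightarrow> x \<in> l2 \<Longrightarrow> (T ^^ j) x \<in> l2"
  by (induction j) (auto intro: bounded_op_l2)

lemma bounded_op_diff:
  assumes "bounded_op T" "x \<in> l2" "y \<in> l2"
  shows "T (\<lambda>n. x n - a * y n) = (\<lambda>n. T x n - a * T y n)"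
proof -
  have "T (\<lambda>n. 1 * x n + (- a) * y n) = (\<lambda>n. 1 * T x n + (- a) * T y n)"
    using assms unfolding bounded_op_def by blast
  then show ?thesis by simp
qed

lemma bounded_op_norm_le:
  assumes "bounded_op T"
  shows "\<exists>C\<ge>0. \<forall>x\<in>l2. l2_norm (T x) \<le> C * l2_norm x"
proof -
  obtain C where C: "\<And>x. x \<in> l2 \<Longrightarrow> l2_norm (T x) \<le> C * l2_norm x"
    using assms unfolding bounded_op_def by blast
  have "l2_norm (T x) \<le> max C 0 * l2_norm x" if "x \<in> l2" for x
  proof -
    have "C * l2_norm x \<le> max C 0 * l2_norm x"
      using l2_norm_nonneg[OF that] by (simp add: mult_right_mono)
    then show ?thesis using C[OF that] by linarith
  qed
  then show ?thesis by (intro exI[of _ "max C 0"]) auto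
qed

lemma approx_eigen_funpow:
  assumes "bounded_op T"
  shows "\<exists>K\<ge>0. \<forall>x\<in>l2. l2_norm (\<lambda>n. (T ^^ j) x n - c ^ j * x n) \<le> K * l2_norm (\<lambda>n. T x n - c * x n)"
proof (induction j)
  case 0
  show ?case by (intro exI[of _ 0]) (simp add: l2_norm_def)
next
  case (Suc j)
  then obtain K where K: "0 \<le> K"
    "\<And>x. x \<in> l2 \<Longrightarrow> l2_norm (\<lambda>n. (T ^^ j) x n - c ^ j * x n) \<le> K * l2_norm (\<lambda>n. T x n - c * x n)"
    by auto
  obtain C where C: "0 \<le> C" "\<And>x. x \<in> l2 \<Longrightarrow> l2_norm (T x) \<le> C * l2_norm x"
    using bounded_op_norm_le[OF assms] by auto
  show ?case
  proof (intro exI[of _ "C * K + cmod c ^ j"] conjI ballI)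
    fix x assume x: "x \<in> l2"
    define u where "u = (\<lambda>n. (T ^^ j) x n - c ^ j * x n)"
    define v where "v = (\<lambda>n. T x n - c * x n)"
    have u: "u \<in> l2"
      unfolding u_def by (intro l2_diff l2_cmult bounded_op_funpow_l2[OF assms x] x)
    have v: "v \<in> l2"
      unfolding v_def by (intro l2_diff l2_cmult bounded_op_l2[OF assms x] x)
    have "T u = (\<lambda>n. (T ^^ Suc j) x n - c ^ j * T x n)"
      using bounded_op_diff[OF assms bounded_op_funpow_l2[OF assms x, of j] x, where a = "c ^ j"]
      by (simp add: u_def)
    then have eq: "(\<lambda>n. (T ^^ Suc j) x n - c ^ Suc j * x n) = (\<lambda>n. T u n + c ^ j * v n)"
      by (simp add: v_def fun_eq_iff algebra_simps)
    have "l2_norm (\<lambda>n. (T ^^ Suc j) x n - c ^ Suc j * x n) \<le> l2_norm (T u) + cmod c ^ j * l2_norm v"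
      unfolding eq
      using l2_norm_triangle[OF bounded_op_l2[OF assms u] l2_cmult[OF v, of "c ^ j"]]
        l2_norm_cmult[OF v, of "c ^ j"]
      by (simp add: norm_power)
    also have "\<dots> \<le> C * (K * l2_norm v) + cmod c ^ j * l2_norm v"
    proof -
      have "l2_norm (T u) \<le> C * l2_norm u" by (rule C(2)[OF u])
      also have "\<dots> \<le> C * (K * l2_norm v)"
        using K(2)[OF x] C(1) unfolding u_def v_def by (rule mult_left_mono)
      finally show ?thesis by simp
    qed
    finally show "l2_norm (\<lambda>n. (T ^^ Suc j) x n - c ^ Suc j * x n) \<le> (C * K + cmod c ^ j) * l2_norm v"
      by (simp add: algebra_simps)
  qed (use C(1) K(1) in simp)
qed

lemma ap_specE:
  assumes "c \<in> ap_spec T" "0 < \<epsilon>"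
  obtains x where "x \<in> l2" "l2_norm x = 1" "l2_norm (\<lambda>n. T x n - c * x n) < \<epsilon>"
proof -
  obtain x :: "nat \<Rightarrow> seq" where x: "\<And>k. x k \<in> l2 \<and> l2_norm (x k) = 1"
    and lim: "(\<lambda>k. l2_norm (\<lambda>n. T (x k) n - c * x k n)) \<longlonglongrightarrow> 0"
    using assms(1) unfolding ap_spec_def by blast
  obtain k where "l2_norm (\<lambda>n. T (x k) n - c * x k n) < \<epsilon>"
    using order_tendstoD(2)[OF lim assms(2)] by (auto simp: eventually_sequentially)
  then show thesis using x that by blast
qed

lemma ap_spec_expansive_ge_1:
  assumes "bounded_op T" "\<And>x. x \<in> l2 \<Longrightarrow> l2_norm x \<le> l2_norm (T x)" "c \<in> ap_spec T"
  shows "1 \<le> cmod c"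
proof (rule ccontr)
  assume "\<not> 1 \<le> cmod c"
  then have "0 < 1 - cmod c" by simp
  then obtain x where x: "x \<in> l2" "l2_norm x = 1" "l2_norm (\<lambda>n. T x n - c * x n) < 1 - cmod c"
    using ap_specE[OF assms(3)] by blast
  have "1 - cmod c \<le> l2_norm (T x) - l2_norm (\<lambda>n. c * x n)"
    using assms(2)[OF x(1)] x(2) l2_norm_cmult[OF x(1)] by simp
  also have "\<dots> \<le> l2_norm (\<lambda>n. T x n - c * x n)"
    by (rule l2_norm_diff_ge[OF bounded_op_l2[OF assms(1) x(1)] l2_cmult[OF x(1)]])
  finally show False using x(3) by simp
qed

lemma ap_spec_funpow_bound:
  assumes "bounded_op T" "\<And>x. x \<in> l2 \<Longrightarrow> l2_norm ((T ^^ j) x) \<le> M * l2_norm x" "c \<in> ap_spec T"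
  shows "cmod c ^ j \<le> M"
proof (rule ccontr)
  assume "\<not> cmod c ^ j \<le> M"
  obtain K where K: "0 \<le> K"
    "\<And>x. x \<in> l2 \<Longrightarrow> l2_norm (\<lambda>n. (T ^^ j) x n - c ^ j * x n) \<le> K * l2_norm (\<lambda>n. T x n - c * x n)"
    using approx_eigen_funpow[OF assms(1)] by blast
  define \<epsilon> where "\<epsilon> = (cmod c ^ j - M) / (K + 1)"
  have "0 < \<epsilon>" using \<open>\<not> cmod c ^ j \<le> M\<close> K(1) by (simp add: \<epsilon>_def)
  then obtain x where x: "x \<in> l2" "l2_norm x = 1" "l2_norm (\<lambda>n. T x n - c * x n) < \<epsilon>"
    using ap_specE[OF assms(3)] by blast
  have "cmod c ^ j - M \<le> l2_norm (\<lambda>n. c ^ j * x n) - l2_norm ((T ^^ j) x)"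
    using assms(2)[OF x(1)] x(2) l2_norm_cmult[OF x(1)] by (simp add: norm_power)
  also have "\<dots> \<le> l2_norm (\<lambda>n. (T ^^ j) x n - c ^ j * x n)"
    using l2_norm_diff_ge[OF l2_cmult[OF x(1), of "c ^ j"] bounded_op_funpow_l2[OF assms(1) x(1), of j]]
      l2_norm_diff_commute[of "\<lambda>n. c ^ j * x n" "(T ^^ j) x"] by simp
  also have "\<dots> \<le> K * l2_norm (\<lambda>n. T x n - c * x n)" by (rule K(2)[OF x(1)])
  also have "\<dots> \<le> K * \<epsilon>" using x(3) K(1) by (simp add: mult_left_mono)
  also have "\<dots> < (K + 1) * \<epsilon>" using \<open>0 < \<epsilon>\<close> by (simp add: algebra_simps)
  finally show False using K(1) by (simp add: \<epsilon>_def)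
qed

lemma ap_spec_subset_unit_circle:
  assumes "bounded_op T"
    and "\<And>x. x \<in> l2 \<Longrightarrow> l2_norm x \<le> l2_norm (T x)"
    and "\<And>r. 1 < r \<Longrightarrow> \<exists>j M. M < r ^ j \<and> (\<forall>x\<in>l2. l2_norm ((T ^^ j) x) \<le> M * l2_norm x)"
  shows "ap_spec T \<subseteq> {z. cmod z = 1}"
proof
  fix c assume c: "c \<in> ap_spec T"
  have "\<not> 1 < cmod c"
  proof
    assume "1 < cmod c"
    then obtain j M where "M < cmod c ^ j" "\<forall>x\<in>l2. l2_norm ((T ^^ j) x) \<le> M * l2_norm x"
      using assms(3) by blast
    moreover from this(2) have "cmod c ^ j \<le> M"
      using ap_spec_funpow_bound[OF assms(1) _ c] by blast
    ultimately show False by simp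
  qed
  then show "c \<in> {z. cmod z = 1}"
    using ap_spec_expansive_ge_1[OF assms(1,2) c] by simp
qed

lemma adj_eq_on_l2:
  assumes "is_adjoint T S" "y \<in> l2"
  shows "adj T y = S y"
proof
  fix k
  have "is_adjoint T (adj T)"
    unfolding adj_def using assms(1) by (rule someI[of "is_adjoint T" S])
  then have "cnj (adj T y k) = l2_inner (T (unit_vec k)) y"
    using assms(2) unit_vec_l2 by (simp add: is_adjoint_def l2_inner_unit_vec)
  also have "\<dots> = cnj (S y k)"
    using assms unit_vec_l2 by (simp add: is_adjoint_def l2_inner_unit_vec)
  finally show "adj T y k = S y k" by simp
qed

lemma op_inv_eq_on_l2:
  assumes "bounded_op S" "\<And>x. x \<in> l2 \<Longrightarrow> A (S x) = x \<and> S (A x) = x" "z \<in> l2"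
  shows "op_inv A z = S z"
proof -
  let ?is_inv = "\<lambda>S. bounded_op S \<and> (\<forall>x\<in>l2. A (S x) = x \<and> S (A x) = x)"
  have "?is_inv (op_inv A)"
    unfolding op_inv_def by (rule someI[of ?is_inv S]) (use assms(1,2) in blast)
  then have "op_inv A z \<in> l2" "A (op_inv A z) = z"
    using assms(3) by (auto simp: bounded_op_def)
  then have "S z = S (A (op_inv A z))" by simp
  also have "\<dots> = op_inv A z" using assms(2) \<open>op_inv A z \<in> l2\<close> by blast
  finally show ?thesis by simp
qed

section \<open>Weighted shifts\<close>

definition bshift :: "(nat \<Rightarrow> real) \<Rightarrow> op" where
  "bshift w y = (\<lambda>n. complex_of_real (w n) * y (Suc n))"

lemma wshift_0 [simp]: "wshift w x 0 = 0"
  and wshift_Suc [simp]: "wshift w x (Suc n) = complex_of_real (w n) * x n"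
  by (simp_all add: wshift_def)

lemma bshift_wshift: "bshift v (wshift w x) = diag_op (\<lambda>n. v n * w n) x"
  by (simp add: bshift_def diag_op_def fun_eq_iff)

lemma wshift_funpow_less: "n < k \<Longrightarrow> (wshift w ^^ k) x n = 0"
proof (induction k arbitrary: n)
  case (Suc k)
  then show ?case by (cases n) auto
qed simp

lemma wshift_funpow_add: "(wshift w ^^ k) x (n + k) = complex_of_real (\<Prod>i<k. w (n + i)) * x n"
  by (induction k) (simp_all add: mult_ac)

lemma bshift_funpow: "(bshift w ^^ k) y n = complex_of_real (\<Prod>i<k. w (n + i)) * y (n + k)"
proof (induction k arbitrary: n)
  case (Suc k)
  then show ?case
    by (simp add: bshift_def prod.lessThan_Suc_shift del: prod.lessThan_Suc)
qed simp

lemma bshift_funpow_wshift_funpow: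
  "(bshift w ^^ k) ((wshift w ^^ k) x) = diag_op (\<lambda>n. \<Prod>i<k. (w (n + i))\<^sup>2) x"
  by (simp add: bshift_funpow wshift_funpow_add diag_op_def fun_eq_iff power2_eq_square
      prod.distrib mult.assoc)

lemma abs_prod_le_power:
  fixes w :: "nat \<Rightarrow> real"
  assumes "\<And>n. \<bar>w n\<bar> \<le> B"
  shows "\<bar>\<Prod>i<k. w (n + i)\<bar> \<le> B ^ k"
  using prod_mono[of "{..<k}" "\<lambda>i. \<bar>w (n + i)\<bar>" "\<lambda>_. B"] assms by (simp add: abs_prod)

locale bounded_weights =
  fixes w :: "nat \<Rightarrow> real" and B :: real
  assumes abs_w_le: "\<And>n. \<bar>w n\<bar> \<le> B"
begin

lemma shifted_wshift_funpow: "(\<lambda>n. (wshift w ^^ k) x (n + k)) = diag_op (\<lambda>n. \<Prod>i<k. w (n + i)) x"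
  by (simp add: wshift_funpow_add diag_op_def)

lemma wshift_funpow_l2:
  assumes "x \<in> l2"
  shows "(wshift w ^^ k) x \<in> l2"
proof -
  have "diag_op (\<lambda>n. \<Prod>i<k. w (n + i)) x \<in> l2"
    using assms abs_prod_le_power[OF abs_w_le] by (rule diag_op_l2)
  then show ?thesis
    using l2_shift_iff[of "(wshift w ^^ k) x" k] unfolding shifted_wshift_funpow by simp
qed

lemma l2_norm_wshift_funpow:
  assumes "x \<in> l2"
  shows "l2_norm ((wshift w ^^ k) x) = l2_norm (diag_op (\<lambda>n. \<Prod>i<k. w (n + i)) x)"
proof -
  have "l2_norm (\<lambda>n. (wshift w ^^ k) x (n + k)) = l2_norm ((wshift w ^^ k) x)"
    by (rule l2_norm_shift[OF wshift_funpow_l2[OF assms]]) (rule wshift_funpow_less)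
  then show ?thesis unfolding shifted_wshift_funpow by simp
qed

lemma wshift_l2: "x \<in> l2 \<Longrightarrow> wshift w x \<in> l2"
  using wshift_funpow_l2[of x 1] by simp

lemma l2_norm_wshift: "x \<in> l2 \<Longrightarrow> l2_norm (wshift w x) = l2_norm (diag_op w x)"
  using l2_norm_wshift_funpow[of x 1] by simp

lemma bounded_op_wshift: "bounded_op (wshift w)"
  unfolding bounded_op_def
proof (intro conjI ballI allI exI[of _ B])
  fix x assume "x \<in> l2"
  then show "wshift w x \<in> l2" "l2_norm (wshift w x) \<le> B * l2_norm x"
    using wshift_l2 l2_norm_wshift l2_norm_diag_op_le[OF _ abs_w_le] by simp_all
qed (simp add: wshift_def fun_eq_iff algebra_simps)

lemma bshift_l2: "y \<in> l2 \<Longrightarrow> bshift w y \<in> l2"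
  unfolding bshift_def using diag_op_l2[OF _ abs_w_le, of "\<lambda>n. y (Suc n)"] l2_shift_iff[of y 1]
  by (simp add: diag_op_def)

lemma is_adjoint_wshift: "is_adjoint (wshift w) (bshift w)"
  unfolding is_adjoint_def
proof (intro conjI ballI)
  fix x y assume x: "x \<in> l2" and y: "y \<in> l2"
  define f where "f = (\<lambda>n. wshift w x n * cnj (y n))"
  have "(\<lambda>n. f (Suc n)) = (\<lambda>n. x n * cnj (bshift w y n))"
    by (simp add: f_def bshift_def fun_eq_iff)
  moreover have "summable (\<lambda>n. x n * cnj (bshift w y n))"
    by (rule summable_l2_inner[OF x bshift_l2[OF y]])
  ultimately have "(\<lambda>n. f (Suc n)) sums l2_inner x (bshift w y)"
    unfolding l2_inner_def by (simp add: summable_sums)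
  then have "f sums l2_inner x (bshift w y)"
    using sums_Suc_iff[of f] by (simp add: f_def)
  then show "l2_inner (wshift w x) y = l2_inner x (bshift w y)"
    by (simp add: l2_inner_def f_def sums_iff)
qed (rule bshift_l2)

lemma adj_wshift: "y \<in> l2 \<Longrightarrow> adj (wshift w) y = bshift w y"
  by (rule adj_eq_on_l2[OF is_adjoint_wshift])

lemma adj_wshift_wshift: "x \<in> l2 \<Longrightarrow> adj (wshift w) (wshift w x) = diag_op (\<lambda>n. (w n)\<^sup>2) x"
  by (simp add: adj_wshift wshift_l2 bshift_wshift power2_eq_square)

lemma adj_wshift_funpow: "y \<in> l2 \<Longrightarrow> (adj (wshift w) ^^ k) y = (bshift w ^^ k) y"
proof (induction k)
  case (Suc k)
  have "(bshift w ^^ k) y \<in> l2"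
    using Suc.prems by (induction k) (auto intro: bshift_l2)
  then show ?case using Suc by (simp add: adj_wshift)
qed simp

lemma m_isometry_wshift_iff:
  "m_isometry m (wshift w) \<longleftrightarrow>
     (\<forall>n. (\<Sum>k\<le>m. (-1) ^ k * real (m choose k) * (\<Prod>i<k. (w (n + i))\<^sup>2)) = 0)"
proof -
  define c where "c n = (\<Sum>k\<le>m. (-1) ^ k * real (m choose k) * (\<Prod>i<k. (w (n + i))\<^sup>2))" for n
  have "(\<lambda>n. \<Sum>k\<le>m. (-1) ^ k * of_nat (m choose k) * ((adj (wshift w) ^^ k) ((wshift w ^^ k) x)) n)
      = diag_op c x" if "x \<in> l2" for x
    using that
    by (simp add: adj_wshift_funpow wshift_funpow_l2 bshift_funpow_wshift_funpow diag_op_def c_def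
        sum_distrib_right fun_eq_iff mult.assoc)
  then show ?thesis
    using bounded_op_wshift diag_op_eq_0_iff[of c] unfolding m_isometry_def c_def by auto
qed

end

section \<open>Finite differences and polynomials\<close>

text \<open>fdiff m f n is (-1)^m times the m-th forward difference of f at n.\<close>

definition fdiff :: "nat \<Rightarrow> (nat \<Rightarrow> real) \<Rightarrow> nat \<Rightarrow> real" where
  "fdiff m f n = (\<Sum>k\<le>m. (-1) ^ k * real (m choose k) * f (n + k))"

lemma fdiff_0 [simp]: "fdiff 0 f n = f n"
  by (simp add: fdiff_def)

lemma fdiff_const_0 [simp]: "fdiff m (\<lambda>_. 0) n = 0"
  by (simp add: fdiff_def)

lemma fdiff_minus [simp]: "fdiff m (\<lambda>n. - f n) n = - fdiff m f n"
  by (simp add: fdiff_def sum_negf[symmetric])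

lemma fdiff_Suc: "fdiff (Suc m) f n = fdiff m (\<lambda>n. f n - f (Suc n)) n"
proof -
  have shift: "(\<Sum>k\<le>Suc m. (-1) ^ k * real (c k) * f (n + k))
      = c 0 * f n - (\<Sum>k\<le>m. (-1) ^ k * real (c (Suc k)) * f (Suc n + k))" for c
    by (simp add: sum.atMost_Suc_shift sum_negf[symmetric] del: sum.atMost_Suc)
  have "fdiff (Suc m) f n
      = (f n - (\<Sum>k\<le>m. (-1) ^ k * real (m choose Suc k) * f (Suc n + k)))
          - (\<Sum>k\<le>m. (-1) ^ k * real (m choose k) * f (Suc n + k))"
    unfolding fdiff_def shift by (simp add: ring_distribs sum.distrib)
  also have "f n - (\<Sum>k\<le>m. (-1) ^ k * real (m choose Suc k) * f (Suc n + k)) = fdiff m f n"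
    using shift[of "\<lambda>k. m choose k"] by (simp add: fdiff_def binomial_eq_0)
  finally show ?thesis
    by (simp add: fdiff_def sum_subtractf algebra_simps)
qed

definition fwd_delta :: "real poly \<Rightarrow> real poly" where
  "fwd_delta p = p \<circ>\<^sub>p [:1, 1:] - p"

lemma poly_fwd_delta: "poly (fwd_delta p) x = poly p (x + 1) - poly p x"
  by (simp add: fwd_delta_def poly_pcompose add.commute)

lemma fwd_delta_add: "fwd_delta (p + q) = fwd_delta p + fwd_delta q"
  by (simp add: fwd_delta_def pcompose_add)

lemma fwd_delta_const: "degree p = 0 \<Longrightarrow> fwd_delta p = 0"
  by (auto simp: fwd_delta_def elim: degree_eq_zeroE)

lemma degree_pcompose_shift: "degree (p \<circ>\<^sub>p [:1, 1:]) = degree p" for p :: "real poly"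
  by (simp add: degree_pcompose)

lemma degree_fwd_delta_le: "degree (fwd_delta p) \<le> degree p"
  unfolding fwd_delta_def
  using degree_diff_le[of "p \<circ>\<^sub>p [:1, 1:]" "degree p" p] by (simp add: degree_pcompose_shift)

lemma coeff_fwd_delta_degree: "coeff (fwd_delta p) (degree p) = 0"
proof -
  have "lead_coeff (p \<circ>\<^sub>p [:1, 1:]) = lead_coeff p"
    by (simp add: lead_coeff_comp)
  then show ?thesis
    by (simp add: fwd_delta_def degree_pcompose_shift)
qed

lemma degree_fwd_delta_less: "0 < degree p \<Longrightarrow> degree (fwd_delta p) < degree p"
  using degree_fwd_delta_le[of p] coeff_fwd_delta_degree[of p]
  by (metis le_neq_implies_less leading_coeff_0_iff degree_0 gr_implies_not0)

lemma fdiff_poly_eq_0: "degree p < m \<Longrightarrow> fdiff m (\<lambda>n. poly p (real n)) n = 0"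
proof (induction m arbitrary: p)
  case (Suc m)
  have "(\<lambda>n. poly p (real n) - poly p (real (Suc n))) = (\<lambda>n. - poly (fwd_delta p) (real n))"
    by (simp add: poly_fwd_delta fun_eq_iff add.commute)
  then have "fdiff (Suc m) (\<lambda>n. poly p (real n)) n = - fdiff m (\<lambda>n. poly (fwd_delta p) (real n)) n"
    unfolding fdiff_Suc fdiff_minus by simp
  moreover have "fwd_delta p = 0 \<or> degree (fwd_delta p) < m"
    using Suc.prems degree_fwd_delta_less[of p] fwd_delta_const[of p] by linarith
  ultimately show ?case
    using Suc.IH by auto
qed simp

lemma fwd_delta_monom:
  fixes c :: real
  shows "degree (fwd_delta (monom c (Suc d))) \<le> d"
    and "coeff (fwd_delta (monom c (Suc d))) d = c * real (Suc d)"
proof -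
  show "degree (fwd_delta (monom c (Suc d))) \<le> d"
    using degree_fwd_delta_less[of "monom c (Suc d)"]
    by (cases "c = 0") (simp_all add: fwd_delta_def degree_monom_eq)
  have X_pow: "([:0, 1:] ^ k) \<circ>\<^sub>p [:1, 1:] = [:1, 1:] ^ k" for k :: nat
    by (induction k) (simp_all add: pcompose_mult pcompose_1 pcompose_pCons)
  have "monom c (Suc d) \<circ>\<^sub>p [:1, 1:] = smult c ([:1, 1:] ^ Suc d)"
    by (simp only: monom_altdef pcompose_smult X_pow)
  moreover have "coeff ([:1, 1:] ^ Suc d) d = (real (Suc d) :: real)"
    by (subst coeff_linear_poly_power) auto
  ultimately show "coeff (fwd_delta (monom c (Suc d))) d = c * real (Suc d)"
    by (simp add: fwd_delta_def coeff_monom)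
qed

lemma ex_fwd_delta_eq: "\<exists>r. degree r \<le> degree q + 1 \<and> fwd_delta r = q"
proof (induction "degree q" arbitrary: q rule: less_induct)
  case less
  define d where "d = degree q"
  define h where "h = monom (lead_coeff q / real (Suc d)) (Suc d)"
  have "degree (q - fwd_delta h) \<le> d"
    using fwd_delta_monom(1) by (simp add: h_def d_def degree_diff_le)
  moreover have "coeff (q - fwd_delta h) d = 0"
    using fwd_delta_monom(2) by (simp add: h_def d_def)
  ultimately have "q - fwd_delta h = 0 \<or> degree (q - fwd_delta h) < degree q"
    by (metis d_def le_neq_implies_less leading_coeff_0_iff)
  then obtain r where r: "degree r \<le> d" "fwd_delta r = q - fwd_delta h"
  proof
    assume "q - fwd_delta h = 0"
    then show thesis by (intro that[of 0]) (simp_all add: fwd_delta_def)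
  next
    assume deg: "degree (q - fwd_delta h) < degree q"
    then obtain r where "degree r \<le> degree (q - fwd_delta h) + 1" "fwd_delta r = q - fwd_delta h"
      using less by blast
    then show thesis
      using deg by (intro that[of r]) (auto simp: d_def)
  qed
  show ?case
  proof (intro exI conjI)
    show "degree (r + h) \<le> degree q + 1"
      using r(1) by (intro degree_add_le) (auto simp: h_def d_def degree_monom_le)
    show "fwd_delta (r + h) = q"
      by (simp add: fwd_delta_add r(2))
  qed
qed

lemma fdiff_eq_0_imp_poly:
  assumes "0 < m" "\<And>n. fdiff m f n = 0"
  shows "\<exists>p. degree p < m \<and> (\<forall>n. f n = poly p (real n))"
  using assms
proof (induction m arbitrary: f)
  case (Suc m)
  define g where "g = (\<lambda>n. f n - f (Suc n))"
  have g: "fdiff m g n = 0" for n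
    using Suc.prems(2) by (simp add: fdiff_Suc g_def)
  obtain r where r: "degree r \<le> m" "\<And>n. poly r (real (Suc n)) - poly r (real n) = g n"
  proof (cases "m = 0")
    case True
    then show thesis using g by (intro that[of 0]) auto
  next
    case False
    then obtain q where q: "degree q < m" "\<And>n. g n = poly q (real n)"
      using Suc.IH[OF _ g] by auto
    obtain r where "degree r \<le> degree q + 1" "fwd_delta r = q"
      using ex_fwd_delta_eq by blast
    then show thesis
      using q by (intro that[of r]) (auto simp: poly_fwd_delta add.commute)
  qed
  have "f n + poly r (real n) = f 0 + poly r 0" for n
  proof (induction n)
    case (Suc n)
    then show ?case using r(2)[of n] unfolding g_def by linarith
  qed simp
  then have "\<forall>n. f n = poly ([:f 0 + poly r 0:] - r) (real n)"
    by (simp add: algebra_simps)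
  moreover have "degree ([:f 0 + poly r 0:] - r) < Suc m"
    using r(1) degree_diff_le[of "[:f 0 + poly r 0:]" m r] by simp
  ultimately show ?case by blast
qed simp

lemma fdiff_eq_0_iff_poly:
  assumes "0 < m"
  shows "(\<forall>n. fdiff m f n = 0) \<longleftrightarrow> (\<exists>p. degree p < m \<and> (\<forall>n. f n = poly p (real n)))"
proof
  assume "\<forall>n. fdiff m f n = 0"
  then show "\<exists>p. degree p < m \<and> (\<forall>n. f n = poly p (real n))"
    using fdiff_eq_0_imp_poly[OF assms] by blast
next
  assume "\<exists>p. degree p < m \<and> (\<forall>n. f n = poly p (real n))"
  then obtain p where "degree p < m" "f = (\<lambda>n. poly p (real n))"
    by auto
  then show "\<forall>n. fdiff m f n = 0"
    using fdiff_poly_eq_0 by simp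
qed

lemma poly_bound_power_degree:
  fixes p :: "real poly"
  shows "\<exists>A\<ge>0. \<forall>x\<ge>1. \<bar>poly p x\<bar> \<le> A * x ^ degree p"
proof (intro exI conjI allI impI)
  fix x :: real assume x: "1 \<le> x"
  have "\<bar>poly p x\<bar> \<le> (\<Sum>i\<le>degree p. \<bar>coeff p i * x ^ i\<bar>)"
    unfolding poly_altdef by (rule sum_abs)
  also have "\<dots> \<le> (\<Sum>i\<le>degree p. \<bar>coeff p i\<bar> * x ^ degree p)"
    using x by (intro sum_mono) (simp add: abs_mult mult_left_mono power_increasing)
  finally show "\<bar>poly p x\<bar> \<le> (\<Sum>i\<le>degree p. \<bar>coeff p i\<bar>) * x ^ degree p"
    by (simp add: sum_distrib_right)
qed (simp add: sum_nonneg)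

lemma ex_poly_less_power:
  fixes p :: "real poly"
  assumes "1 < r"
  shows "\<exists>j. poly p (real (Suc j)) < r ^ j"
proof -
  obtain A where A: "0 \<le> A" "\<And>x. 1 \<le> x \<Longrightarrow> \<bar>poly p x\<bar> \<le> A * x ^ degree p"
    using poly_bound_power_degree by blast
  have "(\<lambda>j. A * (real j + 1) ^ degree p / r ^ j) \<longlonglongrightarrow> 0"
    using assms by real_asymp
  then have "eventually (\<lambda>j. A * (real j + 1) ^ degree p / r ^ j < 1) sequentially"
    by (rule order_tendstoD(2)) simp
  then obtain j where "A * (real j + 1) ^ degree p / r ^ j < 1"
    unfolding eventually_sequentially by blast
  then have "A * (real j + 1) ^ degree p < r ^ j"
    using assms by (simp add: divide_less_eq)
  moreover have "poly p (real (Suc j)) \<le> A * (real j + 1) ^ degree p"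
    using A(2)[of "real j + 1"] by (simp add: add.commute)
  ultimately show ?thesis by (intro exI[of _ j]) linarith
qed

section \<open>Weakly concave m-isometric weighted shifts\<close>

text \<open>wshift_moment w n is ||W^n e_0||^2.\<close>

definition wshift_moment :: "(nat \<Rightarrow> real) \<Rightarrow> nat \<Rightarrow> real" where
  "wshift_moment w n = (\<Prod>i<n. (w i)\<^sup>2)"

lemma wshift_moment_0 [simp]: "wshift_moment w 0 = 1"
  and wshift_moment_Suc [simp]: "wshift_moment w (Suc n) = wshift_moment w n * (w n)\<^sup>2"
  by (simp_all add: wshift_moment_def)

lemma wshift_moment_add: "wshift_moment w (n + k) = wshift_moment w n * (\<Prod>i<k. (w (n + i))\<^sup>2)"
  by (induction k) (simp_all add: mult_ac)

lemma wshift_moment_pos: "(\<And>n. w n \<noteq> 0) \<Longrightarrow> 0 < wshift_moment w n"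
  unfolding wshift_moment_def by (simp add: prod_pos)

lemma wshift_moment_eq_ratio:
  assumes "\<And>n. 0 < f n" "\<And>n. (w n)\<^sup>2 = f (n + 1) / f n"
  shows "wshift_moment w n = f n / f 0"
proof (induction n)
  case (Suc n)
  then show ?case using assms(1)[of n] by (simp add: assms(2))
qed (use assms(1)[of 0] in simp)

lemma fdiff_wshift_moment:
  "fdiff m (wshift_moment w) n
     = wshift_moment w n * (\<Sum>k\<le>m. (-1) ^ k * real (m choose k) * (\<Prod>i<k. (w (n + i))\<^sup>2))"
  by (simp add: fdiff_def wshift_moment_add sum_distrib_left mult_ac)

locale positive_bounded_weights = bounded_weights +
  assumes w_pos: "\<And>n. 0 < w n"
begin

lemma w_nonzero: "w n \<noteq> 0"
  using w_pos[of n] by simp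

lemma w_le: "w n \<le> B"
  using abs_w_le[of n] by simp

lemma moment_pos: "0 < wshift_moment w n"
  using w_nonzero by (rule wshift_moment_pos)

lemma m_isometry_wshift_iff_fdiff:
  "m_isometry m (wshift w) \<longleftrightarrow> (\<forall>n. fdiff m (wshift_moment w) n = 0)"
proof -
  have "wshift_moment w n \<noteq> 0" for n
    using moment_pos[of n] by simp
  then show ?thesis
    by (simp add: m_isometry_wshift_iff fdiff_wshift_moment)
qed

lemma expansive_wshift_iff: "(\<forall>x\<in>l2. l2_norm x \<le> l2_norm (wshift w x)) \<longleftrightarrow> (\<forall>n. 1 \<le> w n)"
proof -
  have "(\<forall>x\<in>l2. l2_norm x \<le> l2_norm (wshift w x))
      \<longleftrightarrow> (\<forall>x\<in>l2. l2_norm (diag_op (\<lambda>_. 1) x) \<le> l2_norm (diag_op w x))"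
    by (simp add: l2_norm_wshift diag_op_def)
  also have "\<dots> \<longleftrightarrow> (\<forall>n. 1 \<le> \<bar>w n\<bar>)"
    using l2_norm_diag_op_le_iff[of "\<lambda>_. 1" "max 1 B" w] abs_w_le by (simp add: le_max_iff_disj)
  finally show ?thesis using w_pos by (simp add: abs_of_pos)
qed

context
  assumes w_ge_1: "\<And>n. 1 \<le> w n"
begin

lemma abs_inverse_w_le: "\<bar>1 / w n\<bar> \<le> 1" and abs_inverse_w2_le: "\<bar>1 / (w n)\<^sup>2\<bar> \<le> 1"
  using w_ge_1[of n] one_le_power[OF w_ge_1[of n], of 2] by simp_all

lemma left_invertible_wshift: "left_invertible (wshift w)"
  unfolding left_invertible_def
proof (intro conjI exI ballI)
  show "bounded_op (wshift w)" by (rule bounded_op_wshift)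
  show "bounded_op (bshift (\<lambda>n. 1 / w n))"
    unfolding bounded_op_def
  proof (intro conjI ballI allI exI[of _ 1])
    fix x assume x: "x \<in> l2"
    have tail: "(\<lambda>n. x (Suc n)) \<in> l2"
      using l2_shift_iff[of x 1] x by simp
    have eq: "bshift (\<lambda>n. 1 / w n) x = diag_op (\<lambda>n. 1 / w n) (\<lambda>n. x (Suc n))"
      by (simp add: bshift_def diag_op_def)
    show "bshift (\<lambda>n. 1 / w n) x \<in> l2"
      unfolding eq using tail abs_inverse_w_le by (rule diag_op_l2)
    have "l2_norm (diag_op (\<lambda>n. 1 / w n) (\<lambda>n. x (Suc n))) \<le> 1 * l2_norm (\<lambda>n. x (Suc n))"
      using tail abs_inverse_w_le by (rule l2_norm_diag_op_le)
    then show "l2_norm (bshift (\<lambda>n. 1 / w n) x) \<le> 1 * l2_norm x"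
      unfolding eq using l2_norm_tail_le[OF x] by simp
  qed (simp add: bshift_def fun_eq_iff algebra_simps)
  show "bshift (\<lambda>n. 1 / w n) (wshift w x) = x" for x
    by (simp add: bshift_wshift diag_op_def w_nonzero)
qed

lemma op_inv_gram_wshift:
  assumes "z \<in> l2"
  shows "op_inv (adj (wshift w) \<circ> wshift w) z = diag_op (\<lambda>n. 1 / (w n)\<^sup>2) z"
proof (rule op_inv_eq_on_l2[OF _ _ assms])
  show "bounded_op (diag_op (\<lambda>n. 1 / (w n)\<^sup>2))"
    using abs_inverse_w2_le by (rule bounded_op_diag_op)
  fix x assume x: "x \<in> l2"
  have "diag_op (\<lambda>n. 1 / (w n)\<^sup>2) x \<in> l2"
    using x abs_inverse_w2_le by (rule diag_op_l2)
  then show "(adj (wshift w) \<circ> wshift w) (diag_op (\<lambda>n. 1 / (w n)\<^sup>2) x) = x \<and>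
      diag_op (\<lambda>n. 1 / (w n)\<^sup>2) ((adj (wshift w) \<circ> wshift w) x) = x"
    using x w_nonzero by (simp add: adj_wshift_wshift diag_op_def)
qed

lemma cauchy_dual_adj_wshift:
  assumes "x \<in> l2"
  shows "cauchy_dual (wshift w) (adj (wshift w) x) = diag_op (\<lambda>n. if n = 0 then 0 else 1) x"
proof -
  have "cauchy_dual (wshift w) (adj (wshift w) x)
      = wshift w (diag_op (\<lambda>n. 1 / (w n)\<^sup>2) (bshift w x))"
    using assms by (simp add: cauchy_dual_def adj_wshift bshift_l2 op_inv_gram_wshift)
  also have "\<dots> = diag_op (\<lambda>n. if n = 0 then 0 else 1) x"
  proof
    fix n show "wshift w (diag_op (\<lambda>n. 1 / (w n)\<^sup>2) (bshift w x)) n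
        = diag_op (\<lambda>n. if n = 0 then 0 else 1) x n"
      using w_nonzero by (cases n) (simp_all add: diag_op_def bshift_def power2_eq_square)
  qed
  finally show ?thesis .
qed

lemma l2_norm_cauchy_dual_wshift:
  assumes "x \<in> l2"
  shows "l2_norm (cauchy_dual (wshift w) (wshift w x)) = l2_norm (diag_op (\<lambda>n. w n / w (Suc n)) x)"
proof -
  define d where "d n = 1 / (w (Suc n))\<^sup>2" for n
  have d_le: "\<bar>d n\<bar> \<le> 1" for n
    using abs_inverse_w2_le[of "Suc n"] by (simp add: d_def)
  have "diag_op (\<lambda>n. 1 / (w n)\<^sup>2) (wshift w x) = wshift w (diag_op d x)"
  proof
    fix n show "diag_op (\<lambda>n. 1 / (w n)\<^sup>2) (wshift w x) n = wshift w (diag_op d x) n"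
      by (cases n) (simp_all add: diag_op_def d_def)
  qed
  then have "l2_norm (cauchy_dual (wshift w) (wshift w x)) = l2_norm ((wshift w ^^ 2) (diag_op d x))"
    using assms by (simp add: cauchy_dual_def wshift_l2 op_inv_gram_wshift numeral_2_eq_2)
  also have "\<dots> = l2_norm (diag_op (\<lambda>n. w n * w (Suc n) * d n) x)"
  proof -
    have "diag_op d x \<in> l2" using assms d_le by (rule diag_op_l2)
    from l2_norm_wshift_funpow[OF this, of 2] show ?thesis
      by (simp add: numeral_2_eq_2 mult_ac)
  qed
  also have "(\<lambda>n. w n * w (Suc n) * d n) = (\<lambda>n. w n / w (Suc n))"
    using w_nonzero by (simp add: d_def fun_eq_iff power2_eq_square)
  finally show ?thesis .
qed

lemma cauchy_dual_wshift_le_iff: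
  "(\<forall>x\<in>l2. l2_norm (cauchy_dual (wshift w) (adj (wshift w) x))
              \<le> l2_norm (cauchy_dual (wshift w) (wshift w x)))
     \<longleftrightarrow> (\<forall>n\<ge>1. w (Suc n) \<le> w n)"
proof -
  have ratio_le: "\<bar>w n / w (Suc n)\<bar> \<le> B" for n
  proof -
    have "w n / w (Suc n) \<le> w n / 1"
      using w_pos[of n] w_ge_1[of "Suc n"] by (intro divide_left_mono) simp_all
    then show ?thesis using w_pos[of n] w_pos[of "Suc n"] w_le[of n] by simp
  qed
  have e_le: "\<bar>if n = 0 then 0 else 1 :: real\<bar> \<le> B" for n
    using w_ge_1[of 0] w_le[of 0] by simp
  have "(\<forall>x\<in>l2. l2_norm (cauchy_dual (wshift w) (adj (wshift w) x))
              \<le> l2_norm (cauchy_dual (wshift w) (wshift w x)))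
      \<longleftrightarrow> (\<forall>x\<in>l2. l2_norm (diag_op (\<lambda>n. if n = 0 then 0 else 1) x)
              \<le> l2_norm (diag_op (\<lambda>n. w n / w (Suc n)) x))"
    by (simp add: cauchy_dual_adj_wshift l2_norm_cauchy_dual_wshift)
  also have "\<dots> \<longleftrightarrow> (\<forall>n. \<bar>if n = 0 then 0 else 1 :: real\<bar> \<le> \<bar>w n / w (Suc n)\<bar>)"
    using e_le ratio_le by (rule l2_norm_diag_op_le_iff)
  also have "\<dots> \<longleftrightarrow> (\<forall>n\<ge>1. w (Suc n) \<le> w n)"
  proof -
    have "\<bar>if n = 0 then 0 else 1 :: real\<bar> \<le> \<bar>w n / w (Suc n)\<bar> \<longleftrightarrow> (1 \<le> n \<longrightarrow> w (Suc n) \<le> w n)" for n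
      using w_pos[of n] w_pos[of "Suc n"] by (cases n) (simp_all add: abs_of_pos le_divide_eq_1_pos)
    then show ?thesis by simp
  qed
  finally show ?thesis .
qed

lemma prod_sq_weights_le_moment:
  assumes "\<And>n. 1 \<le> n \<Longrightarrow> w (Suc n) \<le> w n"
  shows "(\<Prod>i<j. (w (n + i))\<^sup>2) \<le> wshift_moment w (Suc j)"
proof (cases "n = 0")
  case True
  have "wshift_moment w j * 1 \<le> wshift_moment w j * (w j)\<^sup>2"
    using w_ge_1[of j] moment_pos[of j]
    by (intro mult_left_mono) (simp_all add: one_le_power)
  then show ?thesis using True by (simp add: wshift_moment_def)
next
  case False
  have "(\<Prod>i<j. (w (n + i))\<^sup>2) \<le> (\<Prod>i<j. (w (Suc i))\<^sup>2)"
  proof (rule prod_mono)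
    fix i
    have "w (Suc (n - 1 + i)) \<le> w (Suc i)"
      by (rule lift_Suc_antimono_le[where f = "\<lambda>k. w (Suc k)"]) (simp_all add: assms)
    then show "0 \<le> (w (n + i))\<^sup>2 \<and> (w (n + i))\<^sup>2 \<le> (w (Suc i))\<^sup>2"
      using False w_pos[of "n + i"] by (simp add: power_mono)
  qed
  also have "\<dots> \<le> (w 0)\<^sup>2 * (\<Prod>i<j. (w (Suc i))\<^sup>2)"
  proof -
    have "1 * (\<Prod>i<j. (w (Suc i))\<^sup>2) \<le> (w 0)\<^sup>2 * (\<Prod>i<j. (w (Suc i))\<^sup>2)"
      using w_ge_1[of 0] by (intro mult_right_mono) (simp_all add: prod_nonneg one_le_power)
    then show ?thesis by simp
  qed
  also have "\<dots> = wshift_moment w (Suc j)"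
    by (simp add: wshift_moment_def prod.lessThan_Suc_shift del: prod.lessThan_Suc)
  finally show ?thesis .
qed

lemma spectral_radius_wshift_le_1:
  assumes "\<And>n. 1 \<le> n \<Longrightarrow> w (Suc n) \<le> w n"
    and "\<And>n. wshift_moment w n = poly p (real n)"
    and "1 < r"
  shows "\<exists>j M. M < r ^ j \<and> (\<forall>x\<in>l2. l2_norm ((wshift w ^^ j) x) \<le> M * l2_norm x)"
proof -
  have "1 < r\<^sup>2" using assms(3) by (simp add: one_less_power)
  then obtain j where j: "poly p (real (Suc j)) < (r\<^sup>2) ^ j"
    using ex_poly_less_power by blast
  define M where "M = sqrt (wshift_moment w (Suc j))"
  have "M < sqrt ((r ^ j)\<^sup>2)"
    unfolding M_def assms(2) using j by (simp add: power_mult_distrib power_mult[symmetric] mult.commute)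
  then have "M < r ^ j" using assms(3) by simp
  moreover have "\<bar>\<Prod>i<j. w (n + i)\<bar> \<le> M" for n
  proof -
    have "(\<Prod>i<j. w (n + i))\<^sup>2 \<le> wshift_moment w (Suc j)"
      using prod_sq_weights_le_moment[OF assms(1)] by (simp add: prod_power_distrib)
    then show ?thesis unfolding M_def by (metis real_sqrt_abs real_sqrt_le_mono)
  qed
  then have "l2_norm ((wshift w ^^ j) x) \<le> M * l2_norm x" if "x \<in> l2" for x
    using that l2_norm_diag_op_le by (simp add: l2_norm_wshift_funpow)
  ultimately show ?thesis by blast
qed

end

lemma weakly_concave_m_isometry_wshift_iff:
  assumes "0 < m"
  shows "weakly_concave (wshift w) \<and> m_isometry m (wshift w) \<longleftrightarrow>
    (\<forall>n. 1 \<le> w n) \<and> (\<forall>n\<ge>1. w (Suc n) \<le> w n) \<and>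
    (\<exists>p. degree p < m \<and> (\<forall>n. wshift_moment w n = poly p (real n)))"
  (is "?concave \<and> ?isometry \<longleftrightarrow> ?expansive \<and> ?decreasing \<and> ?moment_poly")
proof -
  have "?isometry \<longleftrightarrow> ?moment_poly"
    by (simp add: m_isometry_wshift_iff_fdiff fdiff_eq_0_iff_poly[OF assms])
  moreover have "?concave \<longleftrightarrow> ?expansive \<and> ?decreasing" if ?moment_poly
  proof
    assume ?concave
    then have ?expansive
      unfolding weakly_concave_def expansive_wshift_iff by blast
    with \<open>?concave\<close> show "?expansive \<and> ?decreasing"
      unfolding weakly_concave_def using cauchy_dual_wshift_le_iff by blast
  next
    assume "?expansive \<and> ?decreasing"
    then have expansive: "\<And>n. 1 \<le> w n" and decreasing: "\<And>n. 1 \<le> n \<Longrightarrow> w (Suc n) \<le> w n"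
      by auto
    obtain p where "\<And>n. wshift_moment w n = poly p (real n)"
      using \<open>?moment_poly\<close> by blast
    then have "ap_spec (wshift w) \<subseteq> {z. cmod z = 1}"
      using expansive decreasing spectral_radius_wshift_le_1 expansive_wshift_iff
      by (intro ap_spec_subset_unit_circle bounded_op_wshift) blast+
    then show ?concave
      unfolding weakly_concave_def
      using expansive decreasing left_invertible_wshift expansive_wshift_iff cauchy_dual_wshift_le_iff
      by blast
  qed
  ultimately show ?thesis by blast
qed

lemma weight_ratio_conditions:
  assumes "\<And>n. 0 < f n" "\<And>n. (w n)\<^sup>2 = f (n + 1) / f n"
  shows "1 \<le> w n \<longleftrightarrow> f n \<le> f (n + 1)"
    and "w (Suc n) \<le> w n \<longleftrightarrow> f n * f (n + 2) \<le> (f (n + 1))\<^sup>2"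
proof -
  have "1 \<le> w n \<longleftrightarrow> 1 \<le> (w n)\<^sup>2"
    using w_pos[of n] one_le_power[of "w n" 2] power2_le_imp_le[of 1 "w n"] by auto
  then show "1 \<le> w n \<longleftrightarrow> f n \<le> f (n + 1)"
    using assms(1)[of n] by (simp add: assms(2) le_divide_eq_1_pos)
  have "w (Suc n) \<le> w n \<longleftrightarrow> (w (Suc n))\<^sup>2 \<le> (w n)\<^sup>2"
    using w_pos[of n] w_pos[of "Suc n"] by (simp add: abs_le_square_iff[symmetric] abs_of_pos)
  also have "\<dots> \<longleftrightarrow> f (n + 2) / f (n + 1) \<le> f (n + 1) / f n"
    using assms(2)[of "Suc n"] assms(2)[of n] by (simp add: numeral_2_eq_2)
  also have "\<dots> \<longleftrightarrow> f n * f (n + 2) \<le> (f (n + 1))\<^sup>2"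
    using assms(1)[of n] assms(1)[of "n + 1"]
    by (simp add: divide_le_eq le_divide_eq power2_eq_square mult_ac)
  finally show "w (Suc n) \<le> w n \<longleftrightarrow> f n * f (n + 2) \<le> (f (n + 1))\<^sup>2" .
qed

lemma moment_poly_iff:
  "(\<forall>n. 1 \<le> w n) \<and> (\<forall>n\<ge>1. w (Suc n) \<le> w n) \<and>
     (\<exists>p. degree p < m \<and> (\<forall>n. wshift_moment w n = poly p (real n)))
   \<longleftrightarrow> (\<exists>p :: real poly. degree p < m \<and>
          (\<forall>n::nat. poly p (real n) > 0) \<and>
          (\<forall>n::nat. (w n)\<^sup>2 = poly p (real (n + 1)) / poly p (real n)) \<and>
          (\<forall>n::nat. poly p (real n) \<le> poly p (real (n + 1))) \<and>
          (\<forall>n::nat. n \<ge> 1 \<longrightarrow> poly p (real n) * poly p (real (n + 2)) \<le> (poly p (real (n + 1)))\<^sup>2))"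
  (is "?lhs \<longleftrightarrow> (\<exists>p. degree p < m \<and> ?pos p \<and> ?ratio p \<and> ?mono p \<and> ?log_concave p)")
proof
  assume ?lhs
  then obtain p where p: "degree p < m" "\<And>n. wshift_moment w n = poly p (real n)"
    and expansive: "\<forall>n. 1 \<le> w n" and decreasing: "\<forall>n\<ge>1. w (Suc n) \<le> w n"
    by blast
  have "?pos p" using moment_pos by (simp add: p(2)[symmetric])
  moreover have "?ratio p"
  proof
    fix n
    have "(w n)\<^sup>2 = wshift_moment w (n + 1) / wshift_moment w n"
      using moment_pos[of n] by simp
    then show "(w n)\<^sup>2 = poly p (real (n + 1)) / poly p (real n)"
      unfolding p(2) .
  qed
  ultimately show "\<exists>p. degree p < m \<and> ?pos p \<and> ?ratio p \<and> ?mono p \<and> ?log_concave p"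
    using p(1) expansive decreasing weight_ratio_conditions[of "\<lambda>n. poly p (real n)"]
    by (intro exI[of _ p]) auto
next
  assume "\<exists>p. degree p < m \<and> ?pos p \<and> ?ratio p \<and> ?mono p \<and> ?log_concave p"
  then obtain p where p: "degree p < m" "?pos p" "?ratio p" "?mono p" "?log_concave p"
    by blast
  have "wshift_moment w n = poly (smult (1 / poly p 0) p) (real n)" for n
    using wshift_moment_eq_ratio[of "\<lambda>n. poly p (real n)"] p(2,3) by simp
  moreover have "degree (smult (1 / poly p 0) p) < m"
    using p(1) by (simp add: degree_smult_le le_less_trans[OF degree_smult_le])
  ultimately show ?lhs
    using p(2-5) weight_ratio_conditions[of "\<lambda>n. poly p (real n)"] by blast
qed

end

section \<open>Polynomials with negative real roots\<close>

definition mono_log_concave :: "(real \<Rightarrow> real) \<Rightarrow> bool" where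
  "mono_log_concave g \<longleftrightarrow> (\<forall>x\<ge>0. 0 < g x \<and> g x \<le> g (x + 1) \<and> g x * g (x + 2) \<le> (g (x + 1))\<^sup>2)"

lemma mono_log_concave_at_nat:
  assumes "mono_log_concave g"
  shows "g (real n) \<le> g (real (n + 1))"
    and "g (real n) * g (real (n + 2)) \<le> (g (real (n + 1)))\<^sup>2"
  using assms[unfolded mono_log_concave_def, rule_format, of "real n"] by (simp_all add: ac_simps)

lemma mono_log_concave_const: "0 < c \<Longrightarrow> mono_log_concave (\<lambda>_. c)"
  by (simp add: mono_log_concave_def power2_eq_square)

lemma mono_log_concave_linear: "a < 0 \<Longrightarrow> mono_log_concave (\<lambda>x. x - a)"
  by (simp add: mono_log_concave_def power2_eq_square algebra_simps)

lemma mono_log_concave_mult: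
  assumes "mono_log_concave f" "mono_log_concave g"
  shows "mono_log_concave (\<lambda>x. f x * g x)"
  unfolding mono_log_concave_def
proof (intro allI impI conjI)
  fix x :: real assume x: "0 \<le> x"
  have f: "0 < f x" "f x \<le> f (x + 1)" "f x * f (x + 2) \<le> (f (x + 1))\<^sup>2" "0 < f (x + 2)"
    using assms(1) x unfolding mono_log_concave_def by auto
  have g: "0 < g x" "g x \<le> g (x + 1)" "g x * g (x + 2) \<le> (g (x + 1))\<^sup>2" "0 < g (x + 2)"
    using assms(2) x unfolding mono_log_concave_def by auto
  show "0 < f x * g x" using f g by simp
  show "f x * g x \<le> f (x + 1) * g (x + 1)" using f g by (intro mult_mono) auto
  have "f x * g x * (f (x + 2) * g (x + 2)) = (f x * f (x + 2)) * (g x * g (x + 2))"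
    by (simp add: mult_ac)
  also have "\<dots> \<le> (f (x + 1))\<^sup>2 * (g (x + 1))\<^sup>2"
    using f g by (intro mult_mono) auto
  finally show "f x * g x * (f (x + 2) * g (x + 2)) \<le> (f (x + 1) * g (x + 1))\<^sup>2"
    by (simp add: power_mult_distrib)
qed

lemma mono_log_concave_Re_poly:
  fixes P :: "complex poly"
  assumes "lead_coeff P \<in> \<real>" "0 < Re (lead_coeff P)" "\<And>z. poly P z = 0 \<Longrightarrow> z \<in> \<real> \<and> Re z < 0"
  shows "mono_log_concave (\<lambda>x. Re (poly P (of_real x)))"
  using assms
proof (induction "degree P" arbitrary: P)
  case 0
  then obtain c where "P = [:c:]" by (metis degree_eq_zeroE)
  with 0 show ?case by (simp add: mono_log_concave_const)
next
  case (Suc d)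
  then have "\<not> constant (poly P)" by (simp add: constant_degree)
  then obtain z where z: "poly P z = 0" using fundamental_theorem_of_algebra by blast
  then have "z \<in> \<real>" "Re z < 0" using Suc.prems(3) by auto
  then have "Im z = 0" by (simp add: complex_is_Real_iff)
  obtain Q where PQ: "P = [:-z, 1:] * Q" using z by (metis dvdE poly_eq_0_iff_dvd)
  then have "Q \<noteq> 0" using Suc.hyps(2) by auto
  then have "degree P = degree [:-z, 1:] + degree Q"
    unfolding PQ by (intro degree_mult_eq) auto
  then have "d = degree Q" using Suc.hyps(2) by simp
  moreover have "lead_coeff Q = lead_coeff P"
    unfolding PQ lead_coeff_mult by simp
  moreover have "poly Q y = 0 \<Longrightarrow> y \<in> \<real> \<and> Re y < 0" for y
    using Suc.prems(3)[of y] by (simp add: PQ)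
  ultimately have "mono_log_concave (\<lambda>x. Re (poly Q (of_real x)))"
    using Suc.hyps(1) Suc.prems(1,2) by simp
  then have "mono_log_concave (\<lambda>x. (x - Re z) * Re (poly Q (of_real x)))"
    using mono_log_concave_mult[OF mono_log_concave_linear[OF \<open>Re z < 0\<close>]] by simp
  moreover have "Re (poly P (of_real x)) = (x - Re z) * Re (poly Q (of_real x))" for x
    using \<open>Im z = 0\<close> by (simp add: PQ algebra_simps)
  ultimately show ?case by simp
qed

lemma mono_log_concave_poly:
  fixes p :: "real poly"
  assumes "0 < lead_coeff p"
    and "\<And>z. poly (map_poly complex_of_real p) z = 0 \<Longrightarrow> z \<in> \<real> \<and> Re z < 0"
  shows "mono_log_concave (poly p)"
proof -
  have "Re (poly (map_poly complex_of_real p) (of_real x)) = poly p x" for x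
    by (induction p) (simp_all add: map_poly_pCons)
  moreover have "lead_coeff (map_poly complex_of_real p) = of_real (lead_coeff p)"
    by (simp add: degree_map_poly coeff_map_poly)
  ultimately show ?thesis
    using mono_log_concave_Re_poly[of "map_poly complex_of_real p"] assms by simp
qed

theorem proposition3p3:
  fixes w :: "nat \<Rightarrow> real" and m :: nat
  assumes "\<forall>n. w n > 0" and "bdd_above (range w)" and "m \<ge> 2"
  shows "((weakly_concave (wshift w) \<and> m_isometry m (wshift w)) \<longleftrightarrow>
           (\<exists>p :: real poly. degree p \<le> m - 1 \<and>
              (\<forall>n::nat. poly p (real n) > 0) \<and>
              (\<forall>n::nat. (w n)\<^sup>2 = poly p (real (n + 1)) / poly p (real n)) \<and>
              (\<forall>n::nat. poly p (real n) \<le> poly p (real (n + 1))) \<and>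
              (\<forall>n::nat. n \<ge> 1 \<longrightarrow> poly p (real n) * poly p (real (n + 2)) \<le> (poly p (real (n + 1)))\<^sup>2)))
         \<and> (\<forall>p :: real poly. lead_coeff p > 0 \<and>
              (\<forall>z::complex. poly (map_poly complex_of_real p) z = 0 \<longrightarrow> z \<in> \<real> \<and> Re z < 0) \<longrightarrow>
              (\<forall>n::nat. poly p (real n) \<le> poly p (real (n + 1))) \<and>
              (\<forall>n::nat. n \<ge> 1 \<longrightarrow> poly p (real n) * poly p (real (n + 2)) \<le> (poly p (real (n + 1)))\<^sup>2))"
proof -
  obtain B where "\<And>n. w n \<le> B"
    using assms(2) by (auto simp: bdd_above_def)
  with assms(1) interpret positive_bounded_weights w B
    by unfold_locales (simp_all add: abs_of_pos)
  have "0 < m" and degree_iff: "degree p \<le> m - 1 \<longleftrightarrow> degree p < m" for p :: "real poly"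
    using assms(3) by auto
  show ?thesis
    unfolding degree_iff weakly_concave_m_isometry_wshift_iff[OF \<open>0 < m\<close>] moment_poly_iff
    using mono_log_concave_poly mono_log_concave_at_nat by auto
qed

end
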